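(* Fix integers $s_l,s_h\ge1$ and let $N=s_ls_h$. For parameters $p_h\ge p_l\ge0$, let the three-layer hierarchical random graph $\mathcal{G}$ have co-occurrence (adjacency) matrix $P\in\mathbb{R}^{N\times N}$ obtained by partitioning the $N$ vertices into $s_l$ groups of $s_h$ consecutive vertices and setting $P_{ij}=p_h$ if $i,j$ lie in the same group and $P_{ij}=p_l$ otherwise, with the entries normalized to sum to one. Let $\mathcal{G}'$ be another such graph with the same $s_l,s_h$ and parameters $p_h'\ge p_l'\ge0$ (entries also summing to one). If $p_h-p_l\le p_h'-p_l'$, then for every $t$, $\sigma_t\le\sigma_t'$, where $\sigma_t,\sigma_t'$ denote the $t$-th largest singular values of the co-occurrence matrices of $\mathcal{G}$ and $\mathcal{G}'$, respectively.
   Context: In a hierarchical random graph, the leaves of a hierarchical tree are the graph's vertices and the probability of an edge between two vertices is the probability attached to their lowest common ancestor; here the tree has two hidden layers, with $p_l$ the (high-level) connection probability across groups and $p_h$ the (lower-level) connection probability within a group. *)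

theory Defs
  imports "Jordan_Normal_Form.Char_Poly"
begin

text \<open>Since A^T A is symmetric positive semidefinite, its characteristic polynomial
splits over the reals with nonnegative roots.\<close>
definition singular_values :: "real mat \<Rightarrow> real list" where
  "singular_values A =
     map sqrt (rev (sorted_list_of_multiset
       (proots (char_poly (transpose_mat A * A)))))"

definition sigma :: "real mat \<Rightarrow> nat \<Rightarrow> real" where
  "sigma A t = singular_values A ! (t - 1)"

definition hrg_matrix :: "nat \<Rightarrow> nat \<Rightarrow> real \<Rightarrow> real \<Rightarrow> real mat" where
  "hrg_matrix s_l s_h p_h p_l =
     mat (s_l * s_h) (s_l * s_h)
       (\<lambda>(i, j). if i div s_h = j div s_h then p_h else p_l)"

definition entry_sum :: "real mat \<Rightarrow> real" where
  "entry_sum A = (\<Sum>i<dim_row A. \<Sum>j<dim_col A. A $$ (i, j))"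

end

theory Submission
  imports Defs
begin

text \<open>The co-occurrence matrix is the Kronecker product \<open>C \<otimes> J\<^sub>h\<close> of
\<open>C = p\<^sub>l J + (p\<^sub>h - p\<^sub>l) I\<close> (size \<open>s\<^sub>l\<close>) with the all-ones matrix \<open>J\<^sub>h\<close> (size \<open>s\<^sub>h\<close>).
Factoring it as \<open>F K\<close> with \<open>F\<close> the group-membership matrix and using Sylvester's identity
\<open>\<chi>(F K) = X\<^bsup>n-m\<^esup> \<chi>(K F)\<close>, the characteristic polynomial of its Gram matrix is
\<open>X\<^bsup>N-s\<^sub>l\<^esup> (X - \<beta>\<^sup>2)\<^bsup>s\<^sub>l-1\<^esup> (X - \<gamma>\<^sup>2)\<close> with \<open>\<beta> = s\<^sub>h (p\<^sub>h - p\<^sub>l)\<close> and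
\<open>\<gamma> = p\<^sub>l N + \<beta>\<close>. So the singular values are \<open>\<gamma>\<close> once, \<open>\<beta>\<close> with multiplicity
\<open>s\<^sub>l - 1\<close>, and zero. The entries sum to \<open>N \<gamma>\<close>, so normalisation forces \<open>\<gamma> = 1/N\<close>
for both graphs, while \<open>\<beta>\<close> is monotone in \<open>p\<^sub>h - p\<^sub>l\<close>.\<close>

lemma map_mat_uminus_const_mult:
  fixes F :: "'a :: comm_ring_1 mat"
  assumes "F \<in> carrier_mat n m" and "K \<in> carrier_mat m k"
  shows "map_mat (\<lambda>a. [:-a:]) F * map_mat (\<lambda>a. [:a:]) K = map_mat (\<lambda>a. [:-a:]) (F * K)"
proof -
  have "(\<lambda>a. [:a:] * [:-1:]) = (\<lambda>a::'a. [:-a:])" by (auto simp: fun_eq_iff)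
  then show ?thesis using map_poly_mult(2)[OF assms, of "[:-1:]"] by simp
qed

text \<open>The block matrix \<open>[[X I, F], [K, I]]\<close>: clearing its upper right block gives
\<open>\<chi>(F K)\<close>, clearing its lower left block gives \<open>\<chi>(K F)\<close> up to powers of \<open>X\<close>.\<close>

definition sylvester_block :: "'a :: comm_ring_1 mat \<Rightarrow> 'a mat \<Rightarrow> 'a poly mat" where
  "sylvester_block F K = four_block_mat ([:0,1:] \<cdot>\<^sub>m 1\<^sub>m (dim_row F))
     (map_mat (\<lambda>a. [:a:]) F) (map_mat (\<lambda>a. [:a:]) K) (1\<^sub>m (dim_col F))"

lemma det_sylvester_block:
  fixes F :: "'a :: idom mat"
  assumes F: "F \<in> carrier_mat n m" and K: "K \<in> carrier_mat m n"
  shows "det (sylvester_block F K) = char_poly (F * K)"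
proof -
  let ?F = "map_mat (\<lambda>a. [:a:]) F" and ?K = "map_mat (\<lambda>a. [:a:]) K"
  let ?G = "map_mat (\<lambda>a. [:-a:]) F"
  define L where "L = four_block_mat (1\<^sub>m n) ?G (0\<^sub>m m n) (1\<^sub>m m)"
  have "L * sylvester_block F K = four_block_mat (1\<^sub>m n * ([:0,1:] \<cdot>\<^sub>m 1\<^sub>m n) + ?G * ?K)
      (1\<^sub>m n * ?F + ?G * 1\<^sub>m m) (0\<^sub>m m n * ([:0,1:] \<cdot>\<^sub>m 1\<^sub>m n) + 1\<^sub>m m * ?K) (0\<^sub>m m n * ?F + 1\<^sub>m m * 1\<^sub>m m)"
    unfolding L_def sylvester_block_def using F K by (subst mult_four_block_mat) auto
  also have "\<dots> = four_block_mat (char_poly_matrix (F * K)) (0\<^sub>m n m) ?K (1\<^sub>m m)"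
    using F K by (intro cong_four_block_mat eq_matI)
      (auto simp: map_mat_uminus_const_mult char_poly_matrix_def)
  finally have "det L * det (sylvester_block F K)
      = det (four_block_mat (char_poly_matrix (F * K)) (0\<^sub>m n m) ?K (1\<^sub>m m))"
    using F K by (subst det_mult[symmetric]) (auto simp: L_def sylvester_block_def)
  also have "\<dots> = char_poly (F * K)"
    unfolding char_poly_def using F K by (subst det_four_block_mat_upper_right_zero[of _ n _ m]) auto
  finally have "det L * det (sylvester_block F K) = char_poly (F * K)" .
  moreover have "det L = 1"
    unfolding L_def using F by (subst det_four_block_mat_lower_left_zero[of _ n _ m]) auto
  ultimately show ?thesis by simp
qed

lemma det_sylvester_block_swapped:
  fixes F :: "'a :: idom mat"
  assumes F: "F \<in> carrier_mat n m" and K: "K \<in> carrier_mat m n"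
  shows "[:0,1:] ^ m * det (sylvester_block F K) = [:0,1:] ^ n * char_poly (K * F)"
proof -
  let ?X = "[:0,1:] :: 'a poly"
  let ?F = "map_mat (\<lambda>a. [:a:]) F" and ?K = "map_mat (\<lambda>a. [:a:]) K"
  let ?G = "map_mat (\<lambda>a. [:-a:]) K"
  define L where "L = four_block_mat (1\<^sub>m n) (0\<^sub>m n m) ?G (?X \<cdot>\<^sub>m 1\<^sub>m m)"
  have "L * sylvester_block F K = four_block_mat (1\<^sub>m n * (?X \<cdot>\<^sub>m 1\<^sub>m n) + 0\<^sub>m n m * ?K)
      (1\<^sub>m n * ?F + 0\<^sub>m n m * 1\<^sub>m m) (?G * (?X \<cdot>\<^sub>m 1\<^sub>m n) + (?X \<cdot>\<^sub>m 1\<^sub>m m) * ?K)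
      (?G * ?F + (?X \<cdot>\<^sub>m 1\<^sub>m m) * 1\<^sub>m m)"
    unfolding L_def sylvester_block_def using F K by (subst mult_four_block_mat) auto
  also have "\<dots> = four_block_mat (?X \<cdot>\<^sub>m 1\<^sub>m n) ?F (0\<^sub>m m n) (char_poly_matrix (K * F))"
    using F K by (intro cong_four_block_mat eq_matI)
      (auto simp: map_mat_uminus_const_mult char_poly_matrix_def)
  finally have "det L * det (sylvester_block F K)
      = det (four_block_mat (?X \<cdot>\<^sub>m 1\<^sub>m n) ?F (0\<^sub>m m n) (char_poly_matrix (K * F)))"
    using F K by (subst det_mult[symmetric]) (auto simp: L_def sylvester_block_def)
  also have "\<dots> = ?X ^ n * char_poly (K * F)"
    unfolding char_poly_def using F K by (subst det_four_block_mat_lower_left_zero[of _ n _ m]) auto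
  finally show ?thesis
    unfolding L_def using K by (subst (asm) det_four_block_mat_upper_right_zero[of _ n _ m]) auto
qed

lemma char_poly_mult_swap:
  fixes F :: "'a :: idom mat"
  assumes F: "F \<in> carrier_mat n m" and K: "K \<in> carrier_mat m n" and "m \<le> n"
  shows "char_poly (F * K) = [:0,1:] ^ (n - m) * char_poly (K * F)"
proof -
  have "[:0,1:] ^ m * char_poly (F * K) = [:0,1:] ^ m * ([:0,1:] ^ (n - m) * char_poly (K * F))"
    using det_sylvester_block[OF F K] det_sylvester_block_swapped[OF F K] \<open>m \<le> n\<close>
    by (simp add: mult.assoc power_add[symmetric])
  then show ?thesis by simp
qed

lemma pcompose_power_left: "pcompose (p ^ n) q = pcompose p q ^ n"
  by (induction n) (simp_all add: pcompose_mult pcompose_1)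

lemma char_poly_add_smult_one_mat:
  fixes A :: "'a :: comm_ring_1 mat"
  assumes "A \<in> carrier_mat n n"
  shows "char_poly (A + b \<cdot>\<^sub>m 1\<^sub>m n) = pcompose (char_poly A) [:-b,1:]"
proof -
  have shift: "comm_ring_hom (\<lambda>p. pcompose p [:-b,1:])"
    by unfold_locales (auto simp: pcompose_add pcompose_mult pcompose_1)
  have "map_mat (\<lambda>p. pcompose p [:-b,1:]) (char_poly_matrix A) = char_poly_matrix (A + b \<cdot>\<^sub>m 1\<^sub>m n)"
    using assms by (intro eq_matI) (auto simp: char_poly_matrix_def pcompose_pCons)
  then show ?thesis unfolding char_poly_def comm_ring_hom.hom_det[OF shift, symmetric] by simp
qed

lemma char_poly_const_mat:
  fixes a :: "'a :: idom"
  assumes "n \<ge> 1"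
  shows "char_poly (mat n n (\<lambda>_. a)) = [:0,1:] ^ (n - 1) * [:-(of_nat n * a), 1:]"
proof -
  have "mat n n (\<lambda>_. a) = mat n 1 (\<lambda>_. a) * mat 1 n (\<lambda>_. 1)"
    by (intro eq_matI) (auto simp: scalar_prod_def)
  moreover have "mat 1 n (\<lambda>_. 1) * mat n 1 (\<lambda>_. a) = mat 1 1 (\<lambda>_. of_nat n * a)"
    by (intro eq_matI) (auto simp: scalar_prod_def)
  moreover have "char_poly (mat 1 1 (\<lambda>_. c)) = [:-c, 1:]" for c :: 'a
    by (subst char_poly_upper_triangular) (auto simp: upper_triangular_def diag_mat_def)
  ultimately show ?thesis
    using char_poly_mult_swap[of "mat n 1 (\<lambda>_. a)" n 1 "mat 1 n (\<lambda>_. 1)"] assms by simp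
qed

lemma char_poly_const_plus_diag:
  fixes a b :: "'a :: idom"
  assumes "n \<ge> 1"
  shows "char_poly (mat n n (\<lambda>_. a) + b \<cdot>\<^sub>m 1\<^sub>m n)
    = [:-b,1:] ^ (n - 1) * [:-(of_nat n * a + b), 1:]"
proof -
  have "pcompose [:0,1:] [:-b,1:] = [:-b,1:]" and
    "pcompose [:-(of_nat n * a), 1:] [:-b,1:] = [:-(of_nat n * a + b), 1:]"
    by (simp_all add: pcompose_pCons)
  then show ?thesis
    unfolding char_poly_add_smult_one_mat[OF mat_carrier] char_poly_const_mat[OF assms]
      pcompose_mult pcompose_power_left by simp
qed

lemma sum_lessThan_mult_div:
  fixes f :: "nat \<Rightarrow> 'a :: comm_semiring_1"
  shows "(\<Sum>i<l * h. f (i div h)) = of_nat h * (\<Sum>g<l. f g)"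
proof -
  have "(\<Sum>i\<in>{g * h..<g * h + h}. f (i div h)) = of_nat h * f g" for g
  proof -
    have "i div h = g" if "i \<in> {g * h..<g * h + h}" for i
      using that by (intro div_nat_eqI) (auto simp: algebra_simps)
    then show ?thesis by simp
  qed
  then show ?thesis by (simp add: sum.nat_group[symmetric] sum_distrib_left)
qed

text \<open>\<open>inflate h C\<close> is the Kronecker product of \<open>C\<close> with the all-ones \<open>h \<times> h\<close> matrix.\<close>

definition inflate :: "nat \<Rightarrow> 'a mat \<Rightarrow> 'a mat" where
  "inflate h C = mat (dim_row C * h) (dim_col C * h) (\<lambda>(i, j). C $$ (i div h, j div h))"

lemma transpose_inflate: "transpose_mat (inflate h C) = inflate h (transpose_mat C)"
  by (intro eq_matI) (auto simp: inflate_def less_mult_imp_div_less)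

lemma inflate_mult:
  fixes C :: "'a :: comm_semiring_1 mat"
  assumes "C \<in> carrier_mat n m" and "D \<in> carrier_mat m k"
  shows "inflate h C * inflate h D = inflate h (of_nat h \<cdot>\<^sub>m (C * D))"
proof (rule eq_matI)
  fix i j assume "i < dim_row (inflate h (of_nat h \<cdot>\<^sub>m (C * D)))"
    and "j < dim_col (inflate h (of_nat h \<cdot>\<^sub>m (C * D)))"
  then have i: "i div h < n" and j: "j div h < k" and "i < n * h" "j < k * h"
    using assms by (auto simp: inflate_def less_mult_imp_div_less)
  then have "(inflate h C * inflate h D) $$ (i, j)
      = (\<Sum>q<m * h. C $$ (i div h, q div h) * D $$ (q div h, j div h))"
    using assms by (simp add: inflate_def scalar_prod_def atLeast0LessThan)
  also have "\<dots> = of_nat h * (\<Sum>g<m. C $$ (i div h, g) * D $$ (g, j div h))"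
    by (rule sum_lessThan_mult_div)
  also have "\<dots> = of_nat h * (C * D) $$ (i div h, j div h)"
    using i j assms by (simp add: scalar_prod_def atLeast0LessThan)
  finally show "(inflate h C * inflate h D) $$ (i, j) = inflate h (of_nat h \<cdot>\<^sub>m (C * D)) $$ (i, j)"
    using i j \<open>i < n * h\<close> \<open>j < k * h\<close> assms by (simp add: inflate_def)
qed (use assms in \<open>simp_all add: inflate_def\<close>)


lemma char_poly_inflate:
  fixes B :: "'a :: idom mat"
  assumes B: "B \<in> carrier_mat l l" and "h \<ge> 1"
  shows "char_poly (inflate h B) = [:0,1:] ^ (l * h - l) * char_poly (of_nat h \<cdot>\<^sub>m B)"
proof -
  define F :: "'a mat" where "F = mat (l * h) l (\<lambda>(i, g). if i div h = g then 1 else 0)"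
  define K where "K = mat l (l * h) (\<lambda>(g, j). B $$ (g, j div h))"
  have "F * K = inflate h B"
    using B by (intro eq_matI)
      (auto simp: F_def K_def inflate_def scalar_prod_def less_mult_imp_div_less
        if_distrib[of "\<lambda>x. x * _"] cong: if_cong)
  moreover have "K * F = of_nat h \<cdot>\<^sub>m B"
  proof (rule eq_matI)
    fix g k assume "g < dim_row (of_nat h \<cdot>\<^sub>m B)" and "k < dim_col (of_nat h \<cdot>\<^sub>m B)"
    then have g: "g < l" and k: "k < l" using B by auto
    have "(K * F) $$ (g, k) = (\<Sum>j<l * h. B $$ (g, j div h) * (if j div h = k then 1 else 0))"
      using g k by (simp add: F_def K_def scalar_prod_def atLeast0LessThan)
    also have "\<dots> = of_nat h * (\<Sum>q<l. B $$ (g, q) * (if q = k then 1 else 0))"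
      by (rule sum_lessThan_mult_div)
    finally show "(K * F) $$ (g, k) = (of_nat h \<cdot>\<^sub>m B) $$ (g, k)"
      using g k B by (simp add: if_distrib[of "\<lambda>x. _ * x"] cong: if_cong)
  qed (use B in \<open>simp_all add: F_def K_def\<close>)
  moreover have "l \<le> l * h" using \<open>h \<ge> 1\<close> by simp
  ultimately show ?thesis
    using char_poly_mult_swap[of F "l * h" l K] by (simp add: F_def K_def)
qed

lemma const_plus_diag_mult_self:
  fixes a b :: "'a :: comm_ring_1"
  shows "(mat n n (\<lambda>_. a) + b \<cdot>\<^sub>m 1\<^sub>m n) * (mat n n (\<lambda>_. a) + b \<cdot>\<^sub>m 1\<^sub>m n)
    = mat n n (\<lambda>_. of_nat n * a^2 + 2 * a * b) + b^2 \<cdot>\<^sub>m 1\<^sub>m n"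
proof (rule eq_matI)
  fix g k assume "g < dim_row (mat n n (\<lambda>_. of_nat n * a^2 + 2 * a * b) + b^2 \<cdot>\<^sub>m 1\<^sub>m n)"
    and "k < dim_col (mat n n (\<lambda>_. of_nat n * a^2 + 2 * a * b) + b^2 \<cdot>\<^sub>m 1\<^sub>m n)"
  then have g: "g < n" and k: "k < n" by auto
  have "((mat n n (\<lambda>_. a) + b \<cdot>\<^sub>m 1\<^sub>m n) * (mat n n (\<lambda>_. a) + b \<cdot>\<^sub>m 1\<^sub>m n)) $$ (g, k)
      = (\<Sum>q<n. a * a + a * (if q = k then b else 0) + (if g = q then b else 0) * a
          + (if g = q then b else 0) * (if q = k then b else 0))"
    using g k by (auto simp: scalar_prod_def atLeast0LessThan algebra_simps intro!: sum.cong)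
  also have "\<dots> = of_nat n * a^2 + 2 * a * b + (if g = k then b^2 else 0)"
    using g k by (simp add: sum.distrib if_distrib[of "\<lambda>x. x * _"] if_distrib[of "\<lambda>x. _ * x"]
        power2_eq_square algebra_simps cong: if_cong)
  finally show "((mat n n (\<lambda>_. a) + b \<cdot>\<^sub>m 1\<^sub>m n) * (mat n n (\<lambda>_. a) + b \<cdot>\<^sub>m 1\<^sub>m n)) $$ (g, k)
      = (mat n n (\<lambda>_. of_nat n * a^2 + 2 * a * b) + b^2 \<cdot>\<^sub>m 1\<^sub>m n) $$ (g, k)"
    using g k by simp
qed auto


lemma singular_values_eqI:
  assumes "char_poly (transpose_mat A * A) = [:0,1:] ^ k * [:-(\<beta>^2),1:] ^ j * [:-(\<gamma>^2),1:]"
    and "0 \<le> \<beta>" and "\<beta> \<le> \<gamma>"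
  shows "singular_values A = \<gamma> # replicate j \<beta> @ replicate k 0"
proof -
  let ?roots = "replicate k 0 @ replicate j (\<beta>^2) @ [\<gamma>^2]"
  have roots: "proots (char_poly (transpose_mat A * A)) = mset ?roots"
    unfolding assms(1) by (subst proots_mult, simp, simp)+ (simp add: proots_power)
  have sorted: "sorted ?roots"
    using assms(2,3) by (auto simp: sorted_append power_mono)
  show ?thesis
    unfolding singular_values_def roots sorted_list_of_multiset_mset sorted_sort_id[OF sorted]
    using assms(2,3) by simp
qed

lemma hrg_matrix_eq_inflate:
  "hrg_matrix l h ph pl = inflate h (mat l l (\<lambda>_. pl) + (ph - pl) \<cdot>\<^sub>m 1\<^sub>m l)"
  by (intro eq_matI) (auto simp: hrg_matrix_def inflate_def less_mult_imp_div_less)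

lemma char_poly_hrg_gram:
  fixes ph pl :: real
  assumes "l \<ge> 1" and "h \<ge> 1"
  shows "char_poly (transpose_mat (hrg_matrix l h ph pl) * hrg_matrix l h ph pl)
    = [:0,1:] ^ (l * h - l) * [:-((real h * (ph - pl))^2),1:] ^ (l - 1)
      * [:-((pl * real (l * h) + real h * (ph - pl))^2),1:]"
proof -
  define C where "C = mat l l (\<lambda>_. pl) + (ph - pl) \<cdot>\<^sub>m 1\<^sub>m l"
  define a where "a = real h ^ 2 * (real l * pl^2 + 2 * pl * (ph - pl))"
  have C: "C \<in> carrier_mat l l" by (simp add: C_def)
  have "transpose_mat C = C" by (intro eq_matI) (auto simp: C_def)
  then have gram: "transpose_mat (hrg_matrix l h ph pl) * hrg_matrix l h ph pl
      = inflate h (real h \<cdot>\<^sub>m (C * C))"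
    unfolding hrg_matrix_eq_inflate C_def[symmetric] transpose_inflate using inflate_mult[OF C C] by simp
  have square: "real h \<cdot>\<^sub>m (real h \<cdot>\<^sub>m (C * C)) = mat l l (\<lambda>_. a) + (real h * (ph - pl))^2 \<cdot>\<^sub>m 1\<^sub>m l"
    unfolding C_def a_def const_plus_diag_mult_self by (intro eq_matI) (auto simp: algebra_simps power2_eq_square)
  have top: "real l * a + (real h * (ph - pl))^2 = (pl * real (l * h) + real h * (ph - pl))^2"
    by (simp add: a_def power2_eq_square algebra_simps)
  show ?thesis
    unfolding gram char_poly_inflate[OF mult_carrier_mat[OF C C, THEN smult_carrier_mat] assms(2)]
      square char_poly_const_plus_diag[OF assms(1)] top by (simp only: mult.assoc)
qed

lemma sigma_hrg_matrix:
  fixes ph pl :: real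
  assumes "l \<ge> 1" and "h \<ge> 1" and "pl \<le> ph" and "0 \<le> pl" and "1 \<le> t" and "t \<le> l * h"
  shows "sigma (hrg_matrix l h ph pl) t =
    (if t = 1 then pl * real (l * h) + real h * (ph - pl)
     else if t \<le> l then real h * (ph - pl) else 0)"
proof -
  have "singular_values (hrg_matrix l h ph pl) = (pl * real (l * h) + real h * (ph - pl))
      # replicate (l - 1) (real h * (ph - pl)) @ replicate (l * h - l) 0"
    using assms by (intro singular_values_eqI char_poly_hrg_gram) auto
  then show ?thesis
    using assms by (auto simp: sigma_def nth_Cons' nth_append)
qed

lemma entry_sum_inflate:
  assumes "C \<in> carrier_mat n m"
  shows "entry_sum (inflate h C) = real h ^ 2 * entry_sum C"
proof -
  have "entry_sum (inflate h C) = (\<Sum>i<n * h. \<Sum>j<m * h. C $$ (i div h, j div h))"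
    using assms by (simp add: entry_sum_def inflate_def)
  also have "\<dots> = real h * (\<Sum>g<n. \<Sum>j<m * h. C $$ (g, j div h))"
    using sum_lessThan_mult_div[where f = "\<lambda>g. \<Sum>j<m * h. C $$ (g, j div h)"] by simp
  also have "\<dots> = real h * (\<Sum>g<n. real h * (\<Sum>k<m. C $$ (g, k)))"
    using sum_lessThan_mult_div[where f = "\<lambda>k. C $$ (_, k)"] by simp
  finally show ?thesis
    using assms by (simp add: entry_sum_def sum_distrib_left power2_eq_square mult.assoc)
qed

lemma entry_sum_hrg_matrix:
  "entry_sum (hrg_matrix l h ph pl) = real (l * h) * (pl * real (l * h) + real h * (ph - pl))"
proof -
  define C where "C = mat l l (\<lambda>_. pl) + (ph - pl) \<cdot>\<^sub>m 1\<^sub>m l"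
  have C: "C \<in> carrier_mat l l" by (simp add: C_def)
  have "entry_sum C = (\<Sum>g<l. real l * pl + (ph - pl))"
    by (simp add: C_def entry_sum_def sum.distrib if_distrib[of "\<lambda>x. _ * x"] cong: if_cong)
  also have "\<dots> = real l * (real l * pl + (ph - pl))" by simp
  finally have entry_sum_C: "entry_sum C = real l * (real l * pl + (ph - pl))" .
  show ?thesis
    unfolding hrg_matrix_eq_inflate C_def[symmetric] entry_sum_inflate[OF C] entry_sum_C
    by (simp add: power2_eq_square algebra_simps)
qed

theorem theorem4p2:
  fixes s_l s_h :: nat and p_h p_l p_h' p_l' :: real and t :: nat
  assumes "s_l \<ge> 1" and "s_h \<ge> 1"
    and "p_h \<ge> p_l" and "p_l \<ge> 0"
    and "p_h' \<ge> p_l'" and "p_l' \<ge> 0"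
    and "entry_sum (hrg_matrix s_l s_h p_h p_l) = 1"
    and "entry_sum (hrg_matrix s_l s_h p_h' p_l') = 1"
    and "p_h - p_l \<le> p_h' - p_l'"
    and "1 \<le> t" and "t \<le> s_l * s_h"
  shows "sigma (hrg_matrix s_l s_h p_h p_l) t \<le> sigma (hrg_matrix s_l s_h p_h' p_l') t"
proof -
  let ?N = "real (s_l * s_h)"
  have "?N * (p_l * ?N + real s_h * (p_h - p_l)) = ?N * (p_l' * ?N + real s_h * (p_h' - p_l'))"
    using assms(7,8) by (simp add: entry_sum_hrg_matrix)
  then have "p_l * ?N + real s_h * (p_h - p_l) = p_l' * ?N + real s_h * (p_h' - p_l')"
    using assms(1,2) by simp
  moreover have "real s_h * (p_h - p_l) \<le> real s_h * (p_h' - p_l')"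
    using assms(9) by (simp add: mult_left_mono)
  ultimately show ?thesis
    using assms(1-6,10,11) by (simp add: sigma_hrg_matrix)
qed

end
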